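(* Let $c>0$ and let $\Phi:[0,\infty)\to\mathbb{R}$ be the Gneiting function $$\Phi(r)=\left(1-\frac{r}{c}\right)_+^{5}\left(1+5\frac{r}{c}-27\left(\frac{r}{c}\right)^2\right).$$ Let $\mathbf{p}\in\mathbb{R}^2$, $\Delta_x,\Delta_y\in\mathbb{R}$, and define $\mathbf{H}=(H_1,H_2):\mathbb{R}^2\to\mathbb{R}^2$ by $$H_1(x,y)=x+\Delta_x\,\Phi(\|(x,y)-\mathbf{p}\|),\qquad H_2(x,y)=y+\Delta_y\,\Phi(\|(x,y)-\mathbf{p}\|),$$ where $\|\cdot\|$ is the Euclidean norm. Let $\Delta=\max(|\Delta_x|,|\Delta_y|)$. If $c>4.43\sqrt{2}\,\Delta$ (approximately $c>6.26\,\Delta$), then the Jacobian determinant $$\det J(x,y)=1+\Delta_x\frac{\partial}{\partial x}\Phi(\|(x,y)-\mathbf{p}\|)+\Delta_y\frac{\partial}{\partial y}\Phi(\|(x,y)-\mathbf{p}\|)$$ is strictly positive at every point $(x,y)\in\mathbb{R}^2$.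
   Context: $(t)_+=\max(t,0)$ denotes the truncated power function. The map $\mathbf{H}$ is the one-landmark transformation shifting the source landmark $\mathbf{p}$ to the target landmark $\mathbf{p}+(\Delta_x,\Delta_y)$; positivity of the Jacobian determinant everywhere is the criterion used for topology preservation. *)

theory Defs
  imports "HOL-Analysis.Analysis"
begin

definition tpos :: "real \<Rightarrow> real" where
  "tpos t = max t 0"

definition gneiting :: "real \<Rightarrow> real \<Rightarrow> real" where
  "gneiting c r = (tpos (1 - r / c)) ^ 5 * (1 + 5 * (r / c) - 27 * (r / c)^2)"

end

(* The Jacobian determinant of H at a point at distance R from p equals
   1 + (dx (x - p1) + dy (y - p2)) \<Phi>'(R) / R.  The numerator of the perturbation is at most
   sqrt 2 max(|dx|, |dy|) R, and |\<Phi>'(R)| \<le> 4.43 / c because the derivative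
   21 t (9 t - 4) (1 - t)^4 of the normalised profile stays within [-4.43, 4.43] on [0, 1]
   (checked by nonnegative Bernstein coefficients on a subdivision).  So the perturbation has
   absolute value below 4.43 sqrt 2 max(|dx|, |dy|) / c < 1. *)

theory Submission
  imports Defs
begin

lemma has_real_derivative_tpos_power:
  assumes "2 \<le> n"
  shows "((\<lambda>t. tpos t ^ n) has_real_derivative of_nat n * tpos t ^ (n - 1)) (at t)"
proof -
  consider "t > 0" | "t < 0" | "t = 0" by linarith
  then show ?thesis
  proof cases
    case 1
    have "eventually (\<lambda>s. s > 0) (at t)"
      using 1 by (simp add: eventually_at_topological) (meson greaterThan_iff open_greaterThan)
    then have "eventually (\<lambda>s. tpos s ^ n = s ^ n) (at t)"
      by eventually_elim (simp add: tpos_def)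
    moreover have "((\<lambda>s. s ^ n) has_real_derivative of_nat n * t ^ (n - 1)) (at t)"
      using DERIV_pow[of n t] by simp
    ultimately show ?thesis
      using 1 by (subst has_field_derivative_cong_eventually) (auto simp: tpos_def)
  next
    case 2
    have "eventually (\<lambda>s. s < 0) (at t)"
      using 2 by (simp add: eventually_at_topological) (meson lessThan_iff open_lessThan)
    then have "eventually (\<lambda>s. tpos s ^ n = 0) (at t)"
      by eventually_elim (use assms in \<open>simp add: tpos_def\<close>)
    then show ?thesis
      using 2 assms by (subst has_field_derivative_cong_eventually[where g="\<lambda>_. 0"]) (auto simp: tpos_def power_0_left)
  next
    case 3
    have "((\<lambda>s. tpos s ^ n / s) \<longlongrightarrow> 0) (at 0)"
    proof (rule Lim_null_comparison)
      show "eventually (\<lambda>s. norm (tpos s ^ n / s) \<le> \<bar>s\<bar> ^ (n - 1)) (at 0)"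
      proof (rule always_eventually, rule allI)
        fix s :: real
        have "\<bar>tpos s\<bar> ^ n \<le> \<bar>s\<bar> ^ n"
          by (rule power_mono) (auto simp: tpos_def)
        also have "\<dots> = \<bar>s\<bar> ^ (n - 1) * \<bar>s\<bar>"
          using assms by (simp flip: power_Suc2)
        finally show "norm (tpos s ^ n / s) \<le> \<bar>s\<bar> ^ (n - 1)"
          by (cases "s = 0") (simp_all add: abs_divide power_abs divide_le_eq)
      qed
      show "((\<lambda>s::real. \<bar>s\<bar> ^ (n - 1)) \<longlongrightarrow> 0) (at 0)"
        using assms by (auto intro!: tendsto_eq_intros)
    qed
    then show ?thesis
      using 3 assms by (simp add: has_field_derivative_iff tpos_def power_0_left)
  qed
qed

definition gneiting_deriv :: "real \<Rightarrow> real \<Rightarrow> real" where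
  "gneiting_deriv c r = 21 * (r / c) * (9 * (r / c) - 4) * tpos (1 - r / c) ^ 4 / c"

lemma gneiting_has_real_derivative:
  "(gneiting c has_real_derivative gneiting_deriv c r) (at r)"
proof -
  have scale: "((\<lambda>r. r / c) has_real_derivative 1 / c) (at r)"
    by (intro DERIV_cdivide DERIV_ident)
  have "((\<lambda>r. tpos (1 - r / c) ^ 5) has_real_derivative 5 * tpos (1 - r / c) ^ 4 * (- 1 / c)) (at r)"
    using DERIV_chain2[OF has_real_derivative_tpos_power[of 5] DERIV_diff[OF DERIV_const scale]]
    by simp
  moreover have "((\<lambda>r. 1 + 5 * (r / c) - 27 * (r / c)^2) has_real_derivative (5 - 54 * (r / c)) * (1 / c)) (at r)"
    by (rule DERIV_chain2[OF _ scale, where f="\<lambda>t. 1 + 5 * t - 27 * t^2"]) (auto intro!: derivative_eq_intros)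
  ultimately have deriv: "(gneiting c has_real_derivative
      tpos (1 - r / c) ^ 5 * ((5 - 54 * (r / c)) * (1 / c))
      + 5 * tpos (1 - r / c) ^ 4 * (- 1 / c) * (1 + 5 * (r / c) - 27 * (r / c)^2)) (at r)"
    unfolding gneiting_def by (rule DERIV_mult')
  have tpos_pow5: "tpos (1 - r / c) ^ 5 = tpos (1 - r / c) ^ 4 * (1 - r / c)"
    by (cases "r / c \<le> 1") (simp_all add: tpos_def power_eq_if)
  have "tpos (1 - r / c) ^ 5 * ((5 - 54 * (r / c)) * (1 / c))
      + 5 * tpos (1 - r / c) ^ 4 * (- 1 / c) * (1 + 5 * (r / c) - 27 * (r / c)^2)
      = gneiting_deriv c r"
    unfolding gneiting_deriv_def tpos_pow5 by algebra
  with deriv show ?thesis by simp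
qed

lemma gneiting_deriv_0 [simp]: "gneiting_deriv c 0 = 0"
  by (simp add: gneiting_deriv_def)

lemma has_real_derivative_comp_abs_at_0:
  fixes f :: "real \<Rightarrow> real"
  assumes "(f has_real_derivative 0) (at 0)"
  shows "((\<lambda>h. f \<bar>h\<bar>) has_real_derivative 0) (at 0)"
proof -
  have "((\<lambda>h. (f h - f 0) / h) \<longlongrightarrow> 0) (at 0)"
    using assms by (simp add: has_field_derivative_iff)
  moreover have "filterlim (\<lambda>h::real. \<bar>h\<bar>) (at 0) (at 0)"
    unfolding filterlim_at
    by (auto simp: eventually_at intro!: tendsto_eq_intros exI[of _ 1])
  ultimately have "((\<lambda>h. (f \<bar>h\<bar> - f 0) / \<bar>h\<bar>) \<longlongrightarrow> 0) (at 0)"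
    by (rule filterlim_compose[of "\<lambda>h. (f h - f 0) / h"])
  then have "((\<lambda>h. \<bar>(f \<bar>h\<bar> - f 0) / h\<bar>) \<longlongrightarrow> 0) (at 0)"
    by (subst (asm) tendsto_rabs_zero_iff[symmetric]) simp
  then show ?thesis
    by (simp only: tendsto_rabs_zero_iff has_field_derivative_iff) simp
qed

lemma has_real_derivative_radial:
  fixes \<phi> \<phi>' :: "real \<Rightarrow> real" and a v x :: real
  assumes \<phi>: "\<And>r. (\<phi> has_real_derivative \<phi>' r) (at r)" and "\<phi>' 0 = 0"
  defines "R \<equiv> sqrt ((x - a)^2 + v^2)"
  \<comment> \<open>At the centre R = 0 the stated derivative is 0 because division by 0 yields 0.\<close>
  shows "((\<lambda>s. \<phi> (sqrt ((s - a)^2 + v^2))) has_real_derivative (x - a) * \<phi>' R / R) (at x)"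
proof (cases "R = 0")
  case False
  then have pos: "(x - a)^2 + v^2 > 0"
    unfolding R_def by (simp add: sum_power2_gt_zero_iff)
  have "((\<lambda>s. (s - a)^2 + v^2) has_real_derivative 2 * (x - a)) (at x)"
    by (auto intro!: derivative_eq_intros)
  from DERIV_chain2[OF \<phi> DERIV_chain2[OF DERIV_real_sqrt[OF pos] this]]
  have "((\<lambda>s. \<phi> (sqrt ((s - a)^2 + v^2))) has_real_derivative
      \<phi>' R * (inverse R / 2 * (2 * (x - a)))) (at x)"
    unfolding R_def .
  moreover have "\<phi>' R * (inverse R / 2 * (2 * (x - a))) = (x - a) * \<phi>' R / R"
    using False by (simp add: field_simps)
  ultimately show ?thesis
    by (simp only:)
next
  case True
  then have "x = a" "v = 0"
    unfolding R_def by (simp_all add: sum_power2_eq_zero_iff)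
  have "((\<lambda>h. \<phi> \<bar>h\<bar>) has_real_derivative 0) (at (x - a))"
    using \<phi>[of 0] \<open>\<phi>' 0 = 0\<close> \<open>x = a\<close> by (simp add: has_real_derivative_comp_abs_at_0)
  from DERIV_chain2[OF this DERIV_diff[OF DERIV_ident DERIV_const]]
  have "((\<lambda>s. \<phi> \<bar>s - a\<bar>) has_real_derivative 0) (at x)"
    by simp
  then show ?thesis
    using True \<open>v = 0\<close> by simp
qed

\<comment> \<open>Bernstein form on [a, b] with the binomial coefficients absorbed into cs.\<close>
definition bernstein_form :: "real \<Rightarrow> real \<Rightarrow> real list \<Rightarrow> real \<Rightarrow> real" where
  "bernstein_form a b cs t = (\<Sum>k<length cs. cs ! k * (t - a) ^ k * (b - t) ^ (length cs - 1 - k))"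

lemma nonneg_by_bernstein_form:
  assumes "x = bernstein_form a b cs t" and "list_all (\<lambda>c. 0 \<le> c) cs"
    and "a \<le> t" and "t \<le> b"
  shows "0 \<le> x"
  using assms unfolding bernstein_form_def
  by (auto simp: list_all_length intro!: sum_nonneg mult_nonneg_nonneg zero_le_power)

\<comment> \<open>The minimum, about -4.4264, lies near t = 0.129; hence the fine subdivision there.\<close>
lemma gneiting_slope_lower_bound:
  fixes t :: real
  assumes "0 \<le> t" and "t \<le> 1"
  shows "- 4.43 \<le> 21 * t * (9 * t - 4) * (1 - t) ^ 4"
proof -
  consider "t \<le> 1/8" | "1/8 \<le> t" "t \<le> 9/64" | "9/64 \<le> t" "t \<le> 5/32" | "5/32 \<le> t" "t \<le> 3/16" | "3/16 \<le> t" "t \<le> 1/4" | "1/4 \<le> t" "t \<le> 1/2" | "1/2 \<le> t"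
    using assms by linarith
  then have "0 \<le> 4.43 + 21 * t * (9 * t - 4) * (1 - t) ^ 4"
  proof cases
    case 1
    show ?thesis
      by (rule nonneg_by_bernstein_form[OF _ _ assms(1) 1,
            where cs = "[29032448/25, 105381888/25, 29036544/5, 18286592/5, 4777344/5, 1322688/25, 40373/25]"])
        (simp add: bernstein_form_def lessThan_nat_numeral, algebra, simp)
  next
    case 2
    show ?thesis
      by (rule nonneg_by_bernstein_form[OF _ _ 2,
            where cs = "[10583539712/25, 28097052672/25, 10992807936/5, 29260802048/5, 46289305536/5, 166852041072/25, 44259001637/25]"])
        (simp add: bernstein_form_def lessThan_nat_numeral, algebra, simp)
  next
    case 3
    show ?thesis
      by (rule nonneg_by_bernstein_form[OF _ _ 3,
            where cs = "[44259001637/25, 364255978572/25, 243693243036/5, 422525366048/5, 401170749936/5, 991964897472/25, 200268744512/25]"])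
        (simp add: bernstein_form_def lessThan_nat_numeral, algebra, simp)
  next
    case 4
    show ?thesis
      by (rule nonneg_by_bernstein_form[OF _ _ 4,
            where cs = "[3129199133/25, 25326681348/25, 16564839324/5, 28035643232/5, 25988179824/5, 62785194048/25, 12395801408/25]"])
        (simp add: bernstein_form_def lessThan_nat_numeral, algebra, simp)
  next
    case 5
    show ?thesis
      by (rule nonneg_by_bernstein_form[OF _ _ 5,
            where cs = "[193684397/25, 1524281832/25, 967628016/5, 1587922688/5, 1426511616/5, 3339282432/25, 638799872/25]"])
        (simp add: bernstein_form_def lessThan_nat_numeral, algebra, simp)
  next
    case 6
    show ?thesis
      by (rule nonneg_by_bernstein_form[OF _ _ 6,
            where cs = "[155957/25, 1417692/25, 963996/5, 1562528/5, 1318896/5, 2822592/25, 487232/25]"])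
        (simp add: bernstein_form_def lessThan_nat_numeral, algebra, simp)
  next
    case 7
    show ?thesis
      by (rule nonneg_by_bernstein_form[OF _ _ 7 assms(2),
            where cs = "[7613/25, 48828/25, 23364/5, 28352/5, 21264/5, 42528/25, 7088/25]"])
        (simp add: bernstein_form_def lessThan_nat_numeral, algebra, simp)
  qed
  then show ?thesis
    by linarith
qed

lemma gneiting_slope_upper_bound:
  fixes t :: real
  assumes "0 \<le> t" and "t \<le> 1"
  shows "21 * t * (9 * t - 4) * (1 - t) ^ 4 \<le> 4.43"
proof -
  consider "t \<le> 1/2" | "1/2 \<le> t"
    using assms by linarith
  then have "0 \<le> 4.43 - 21 * t * (9 * t - 4) * (1 - t) ^ 4"
  proof cases
    case 1
    show ?thesis
      by (rule nonneg_by_bernstein_form[OF _ _ assms(1) 1,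
            where cs = "[7088/25, 109728/25, 46464/5, 45152/5, 25464/5, 42528/25, 6563/25]"])
        (simp add: bernstein_form_def lessThan_nat_numeral, algebra, simp)
  next
    case 2
    show ?thesis
      by (rule nonneg_by_bernstein_form[OF _ _ 2 assms(2),
            where cs = "[6563/25, 36228/25, 19164/5, 28352/5, 21264/5, 42528/25, 7088/25]"])
        (simp add: bernstein_form_def lessThan_nat_numeral, algebra, simp)
  qed
  then show ?thesis
    by linarith
qed

lemma abs_gneiting_deriv_le:
  assumes "0 < c" and "0 \<le> r"
  shows "\<bar>gneiting_deriv c r\<bar> \<le> 4.43 / c"
proof (cases "r / c \<le> 1")
  case True
  have "0 \<le> r / c"
    using assms by simp
  with True have "\<bar>21 * (r / c) * (9 * (r / c) - 4) * (1 - r / c) ^ 4\<bar> \<le> 4.43"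
    unfolding abs_le_iff
    using gneiting_slope_lower_bound[of "r / c"] gneiting_slope_upper_bound[of "r / c"] by linarith
  then have "\<bar>21 * (r / c) * (9 * (r / c) - 4) * (1 - r / c) ^ 4\<bar> / c \<le> 4.43 / c"
    by (rule divide_right_mono) (use assms in simp)
  with True assms(1) show ?thesis
    by (simp add: gneiting_deriv_def tpos_def abs_divide)
next
  case False
  then show ?thesis
    using assms(1) by (simp add: gneiting_deriv_def tpos_def)
qed

lemma abs_linear_form_le:
  fixes dx dy u v :: real
  shows "\<bar>dx * u + dy * v\<bar> \<le> sqrt 2 * max \<bar>dx\<bar> \<bar>dy\<bar> * sqrt (u^2 + v^2)"
proof -
  have uv: "\<bar>u\<bar> + \<bar>v\<bar> \<le> sqrt 2 * sqrt (u^2 + v^2)"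
    using complex_abs_le_norm[of "Complex u v"] by (simp add: complex_norm)
  have "\<bar>dx * u + dy * v\<bar> \<le> \<bar>dx\<bar> * \<bar>u\<bar> + \<bar>dy\<bar> * \<bar>v\<bar>"
    by (metis abs_mult abs_triangle_ineq)
  also have "\<dots> \<le> max \<bar>dx\<bar> \<bar>dy\<bar> * (\<bar>u\<bar> + \<bar>v\<bar>)"
    by (simp add: distrib_left add_mono mult_right_mono)
  also have "\<dots> \<le> max \<bar>dx\<bar> \<bar>dy\<bar> * (sqrt 2 * sqrt (u^2 + v^2))"
    by (rule mult_left_mono[OF uv]) simp
  finally show ?thesis
    by (simp add: mult_ac)
qed

lemma abs_gneiting_perturbation_less_1:
  fixes c dx dy u v :: real
  assumes "0 < c" and "4.43 * sqrt 2 * max \<bar>dx\<bar> \<bar>dy\<bar> < c"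
  defines "R \<equiv> sqrt (u^2 + v^2)"
  shows "\<bar>(dx * u + dy * v) * (gneiting_deriv c R / R)\<bar> < 1"
proof -
  define D where "D = sqrt 2 * max \<bar>dx\<bar> \<bar>dy\<bar>"
  have RK: "R * \<bar>gneiting_deriv c R / R\<bar> \<le> 4.43 / c"
    using abs_gneiting_deriv_le[OF assms(1), of R]
    by (cases "R = 0") (auto simp: R_def abs_divide)
  have "\<bar>(dx * u + dy * v) * (gneiting_deriv c R / R)\<bar> \<le> D * R * \<bar>gneiting_deriv c R / R\<bar>"
    unfolding abs_mult D_def R_def by (rule mult_right_mono[OF abs_linear_form_le]) simp
  also have "\<dots> \<le> D * (4.43 / c)"
    unfolding mult.assoc by (rule mult_left_mono[OF RK]) (simp add: D_def)
  also have "\<dots> < 1"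
    using assms by (simp add: D_def field_simps)
  finally show ?thesis .
qed

theorem mainTheorem2:
  fixes c dx dy x y :: real and p :: "real \<times> real"
  assumes "c > 0"
    and "c > 4.43 * sqrt 2 * max \<bar>dx\<bar> \<bar>dy\<bar>"
  shows "\<exists>Dx Dy.
           ((\<lambda>s. gneiting c (norm ((s, y) - p))) has_real_derivative Dx) (at x) \<and>
           ((\<lambda>s. gneiting c (norm ((x, s) - p))) has_real_derivative Dy) (at y) \<and>
           1 + dx * Dx + dy * Dy > 0"
proof -
  obtain a b where p: "p = (a, b)"
    by (cases p)
  define R where "R = sqrt ((x - a)^2 + (y - b)^2)"
  define K where "K = gneiting_deriv c R / R"
  note radial = has_real_derivative_radial[OF gneiting_has_real_derivative gneiting_deriv_0]
  have "((\<lambda>s. gneiting c (norm ((s, y) - p))) has_real_derivative (x - a) * K) (at x)"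
    using radial[of c a "y - b" x] by (simp add: p norm_Pair K_def R_def)
  moreover have "((\<lambda>s. gneiting c (norm ((x, s) - p))) has_real_derivative (y - b) * K) (at y)"
    using radial[of c b "x - a" y] by (simp add: p norm_Pair K_def R_def add.commute)
  moreover have "\<bar>(dx * (x - a) + dy * (y - b)) * K\<bar> < 1"
    using abs_gneiting_perturbation_less_1[OF assms, of "x - a" "y - b"]
    by (simp add: K_def R_def)
  then have "1 + dx * ((x - a) * K) + dy * ((y - b) * K) > 0"
    by (simp add: algebra_simps abs_less_iff)
  ultimately show ?thesis
    by blast
qed

end
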